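(* Let $\Sigma$ be a real symmetric positive definite $n\times n$ matrix, let $D_0$ be the diagonal matrix with $[D_0]_{ii}=\dfrac{1}{2[\Sigma^{-1}]_{ii}}$, and let $\lambda_{\min}$ be the smallest eigenvalue of $D_0^{-1/2}\Sigma D_0^{-1/2}$. Let \[\mathcal S(\Sigma)=\{(\hat\Sigma,\tilde\Sigma)\mid \Sigma=\hat\Sigma+\tilde\Sigma,\ \hat\Sigma\ge0,\ \tilde\Sigma\ge 0,\ \tilde\Sigma\text{ diagonal}\},\] $L(K,\hat\Sigma,\tilde\Sigma)=\operatorname{trace}(\hat\Sigma-K\hat\Sigma-\hat\Sigma K'+K(\hat\Sigma+\tilde\Sigma)K')$ for $K\in\mathbb R^{n\times n}$, and for $\lambda\ge 0$ let $(\hat\Sigma_{\lambda,\rm opt},\tilde\Sigma_{\lambda,\rm opt})$ be the (unique) maximizer over $\mathcal S(\Sigma)$ of \[\min_K\big(L(K,\hat\Sigma,\tilde\Sigma)-\lambda\operatorname{trace}(\hat\Sigma)\big)=\operatorname{trace}\big((1-\lambda)\hat\Sigma-\hat\Sigma\Sigma^{-1}\hat\Sigma\big).\] Then for every $\lambda\ge 0$ with $\lambda\ge\lambda_{\min}-1$, the matrix $\hat\Sigma_{\lambda,\rm opt}$ is singular.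
   Context: All matrices $\hat\Sigma,\tilde\Sigma$ are real symmetric $n\times n$; $M\ge0$ means positive semidefinite. This maximizer corresponds to the regularized min-max problem $\min_K\max_{\mathcal S(\Sigma)}(L-\lambda\operatorname{trace}(\hat\Sigma))$, for which min and max can be exchanged. *)

theory Defs
  imports "HOL-Analysis.Analysis"
begin

definition symmetric_mat :: "real^'n^'n \<Rightarrow> bool" where
  "symmetric_mat M \<longleftrightarrow> transpose M = M"

definition psd :: "real^'n^'n \<Rightarrow> bool" where
  "psd M \<longleftrightarrow> symmetric_mat M \<and> (\<forall>x. x \<bullet> (M *v x) \<ge> 0)"

definition pos_def :: "real^'n^'n \<Rightarrow> bool" where
  "pos_def M \<longleftrightarrow> symmetric_mat M \<and> (\<forall>x. x \<noteq> 0 \<longrightarrow> x \<bullet> (M *v x) > 0)"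

definition diagonal_mat :: "real^'n^'n \<Rightarrow> bool" where
  "diagonal_mat M \<longleftrightarrow> (\<forall>i j. i \<noteq> j \<longrightarrow> M $ i $ j = 0)"

definition diag_mat :: "(real^'n) \<Rightarrow> real^'n^'n" where
  "diag_mat d = (\<chi> i j. if i = j then d $ i else 0)"

definition eigenvalues :: "real^'n^'n \<Rightarrow> real set" where
  "eigenvalues M = {\<mu>. \<exists>v. v \<noteq> 0 \<and> M *v v = \<mu> *\<^sub>R v}"

definition D0 :: "real^'n^'n \<Rightarrow> real^'n^'n" where
  "D0 S = diag_mat (\<chi> i. 1 / (2 * matrix_inv S $ i $ i))"

definition D0_inv_sqrt :: "real^'n^'n \<Rightarrow> real^'n^'n" where
  "D0_inv_sqrt S = diag_mat (\<chi> i. sqrt (2 * matrix_inv S $ i $ i))"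

definition lambda_min :: "real^'n^'n \<Rightarrow> real" where
  "lambda_min S = Min (eigenvalues (D0_inv_sqrt S ** S ** D0_inv_sqrt S))"

definition S_set :: "real^'n^'n \<Rightarrow> ((real^'n^'n) \<times> (real^'n^'n)) set" where
  "S_set S = {(Sh, St). S = Sh + St \<and> psd Sh \<and> psd St \<and> diagonal_mat St}"

definition L_fun :: "real^'n^'n \<Rightarrow> real^'n^'n \<Rightarrow> real^'n^'n \<Rightarrow> real" where
  "L_fun K Sh St = trace (Sh - K ** Sh - Sh ** transpose K + K ** (Sh + St) ** transpose K)"

text \<open>The regularised objective min_K (L(K,Sh,St) - lam trace Sh), in the closed
  form given in the paper: trace((1-lam) Sh - Sh Sigma^-1 Sh).\<close>
definition reg_obj :: "real \<Rightarrow> real^'n^'n \<Rightarrow> real^'n^'n \<Rightarrow> real" where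
  "reg_obj lam S Sh = trace ((1 - lam) *\<^sub>R Sh - Sh ** matrix_inv S ** Sh)"

definition is_opt :: "real \<Rightarrow> real^'n^'n \<Rightarrow> real^'n^'n \<Rightarrow> real^'n^'n \<Rightarrow> bool" where
  "is_opt lam S Sh St \<longleftrightarrow> (Sh, St) \<in> S_set S \<and>
     (\<forall>(A, B) \<in> S_set S. reg_obj lam S A \<le> reg_obj lam S Sh)"

end

theory Submission
  imports Defs
begin

text \<open>Suppose the optimal \<open>Sh\<close> were invertible, hence positive definite.  Then moving a small
  amount from a diagonal entry of \<open>Sh\<close> to the same entry of \<open>St\<close> stays feasible, and optimality
  against this move yields \<open>St $ i $ i \<ge> (1 + lam) * D0 S $ i $ i\<close> for every \<open>i\<close>.  Now take
  \<open>w = D0^(-1/2) v\<close> for an eigenvector \<open>v\<close> of \<open>D0^(-1/2) S D0^(-1/2)\<close> belonging to \<open>lambda_min\<close>,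
  so that \<open>w' S w = lambda_min * w' D0 w\<close>.  Then
  \<open>w' Sh w = w' S w - w' St w \<le> (lambda_min - 1 - lam) * w' D0 w \<le> 0\<close>, contradicting positive
  definiteness of \<open>Sh\<close>.\<close>

lemma transpose_add: "transpose (A + B :: 'a::semiring_1^'n^'m) = transpose A + transpose B"
  by (simp add: transpose_def vec_eq_iff)

lemma transpose_diff: "transpose (A - B :: 'a::ring_1^'n^'m) = transpose A - transpose B"
  by (simp add: transpose_def vec_eq_iff)

lemma matrix_add_rdistrib: "((A :: 'a::semiring_1^'n^'m) + B) ** C = A ** C + B ** C"
  by (simp add: matrix_matrix_mult_def vec_eq_iff sum.distrib distrib_right)

lemma matrix_diff_ldistrib: "(A :: 'a::ring_1^'n^'m) ** (B - C) = A ** B - A ** C"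
  by (simp add: matrix_matrix_mult_def vec_eq_iff sum_subtractf right_diff_distrib)

lemma matrix_diff_rdistrib: "((A :: 'a::ring_1^'n^'m) - B) ** C = A ** C - B ** C"
  by (simp add: matrix_matrix_mult_def vec_eq_iff sum_subtractf left_diff_distrib)

lemma trace_scaleR: "trace (k *\<^sub>R (A :: real^'n^'n)) = k * trace A"
  by (simp add: trace_def sum_distrib_left)

lemma symmetric_mat_inner_commute:
  assumes "symmetric_mat M"
  shows "x \<bullet> (M *v y) = (M *v x) \<bullet> y"
proof -
  have "x \<bullet> (M *v y) = (x v* M) \<bullet> y"
    by (simp add: dot_lmul_matrix)
  also have "x v* M = transpose M *v x"
    by simp
  also have "\<dots> = M *v x"
    using assms by (simp add: symmetric_mat_def)
  finally show ?thesis .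
qed

section \<open>Diagonal matrices\<close>

lemma diagonal_mat_sum_row:
  assumes "diagonal_mat D"
  shows "(\<Sum>k\<in>UNIV. D $ i $ k * x $ k) = D $ i $ i * x $ i"
proof -
  have "(\<Sum>k\<in>UNIV. D $ i $ k * x $ k) = (\<Sum>k\<in>UNIV. if k = i then D $ i $ i * x $ i else 0)"
    using assms by (intro sum.cong) (auto simp: diagonal_mat_def)
  then show ?thesis by simp
qed

lemma diagonal_mat_mult_vec:
  assumes "diagonal_mat D"
  shows "D *v x = (\<chi> i. D $ i $ i * x $ i)"
  using diagonal_mat_sum_row[OF assms] by (simp add: matrix_vector_mult_def vec_eq_iff)

lemma diagonal_mat_quadratic_form:
  assumes "diagonal_mat D"
  shows "x \<bullet> (D *v x) = (\<Sum>i\<in>UNIV. D $ i $ i * (x $ i)\<^sup>2)"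
  unfolding diagonal_mat_mult_vec[OF assms] inner_vec_def
  by (intro sum.cong) (simp_all add: power2_eq_square)

lemma diagonal_mat_mult_diag_left:
  assumes "diagonal_mat D"
  shows "(D ** P) $ i $ i = D $ i $ i * P $ i $ i"
  using diagonal_mat_sum_row[OF assms, where x = "\<chi> k. P $ k $ i"]
  by (simp add: matrix_matrix_mult_def)

lemma diagonal_mat_mult_diag_right:
  assumes "diagonal_mat D"
  shows "(P ** D) $ i $ i = P $ i $ i * D $ i $ i"
proof -
  have "(\<Sum>k\<in>UNIV. P $ i $ k * D $ k $ i) = (\<Sum>k\<in>UNIV. if k = i then P $ i $ i * D $ i $ i else 0)"
    using assms by (intro sum.cong) (auto simp: diagonal_mat_def)
  then show ?thesis by (simp add: matrix_matrix_mult_def)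
qed

lemma diagonal_diag_mat: "diagonal_mat (diag_mat d)"
  by (simp add: diagonal_mat_def diag_mat_def)

lemma symmetric_diag_mat: "symmetric_mat (diag_mat d)"
  by (simp add: symmetric_mat_def diag_mat_def transpose_def vec_eq_iff)

lemma diag_mat_nth_diag [simp]: "diag_mat d $ i $ i = d $ i"
  by (simp add: diag_mat_def)

lemma diag_mat_mult_vec: "diag_mat d *v x = (\<chi> i. d $ i * x $ i)"
  by (simp add: diagonal_mat_mult_vec[OF diagonal_diag_mat])

lemma diag_mat_quadratic_form: "x \<bullet> (diag_mat d *v x) = (\<Sum>i\<in>UNIV. d $ i * (x $ i)\<^sup>2)"
  by (simp add: diagonal_mat_quadratic_form[OF diagonal_diag_mat])

lemma quadratic_form_diag_mat_axis: "x \<bullet> (diag_mat (axis i 1) *v x) = (x $ i)\<^sup>2"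
  by (simp add: diag_mat_quadratic_form axis_def if_distrib[of "\<lambda>a. a * _"] cong: if_cong)

lemma trace_diag_mat_axis_mult: "trace (diag_mat (axis i 1) ** X) = X $ i $ i"
  by (simp add: trace_def diagonal_mat_mult_diag_left[OF diagonal_diag_mat] axis_def
      if_distrib[of "\<lambda>a. a * _"] cong: if_cong)

lemma trace_diag_mat_axis: "trace (diag_mat (axis i 1) :: real^'n^'n) = 1"
  by (simp add: trace_def axis_def)

section \<open>Quadratic forms of symmetric matrices\<close>

lemma psd_quadratic_form_eq_0_imp_kernel:
  assumes "psd N" and "x \<bullet> (N *v x) = 0"
  shows "N *v x = 0"
proof (rule ccontr)
  assume "N *v x \<noteq> 0"
  define y where "y = N *v x"
  define a where "a = y \<bullet> y"
  define b where "b = y \<bullet> (N *v y)"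
  have a: "a > 0" using \<open>N *v x \<noteq> 0\<close> by (simp add: a_def y_def)
  have b: "b \<ge> 0" using assms(1) by (simp add: b_def psd_def)
  have xy: "x \<bullet> (N *v y) = a"
    using symmetric_mat_inner_commute[of N x y] assms(1)
    by (simp add: a_def y_def psd_def inner_commute)
  have expand: "(x - t *\<^sub>R y) \<bullet> (N *v (x - t *\<^sub>R y)) = t\<^sup>2 * b - 2 * t * a" for t
    using assms(2) xy
    by (simp add: matrix_vector_mult_diff_distrib matrix_vector_mult_scaleR inner_diff_left
        inner_diff_right a_def b_def y_def power2_eq_square algebra_simps)
  define t where "t = a / (b + 1)"
  have "t > 0" using a b by (simp add: t_def)
  have "0 \<le> (x - t *\<^sub>R y) \<bullet> (N *v (x - t *\<^sub>R y))"
    using assms(1) by (simp add: psd_def)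
  then have "0 \<le> t * (t * b - 2 * a)"
    by (simp only: expand) (simp add: power2_eq_square algebra_simps)
  then have "0 \<le> t * b - 2 * a"
    using \<open>t > 0\<close> by (simp add: zero_le_mult_iff)
  moreover have "t * b < a" using a b by (simp add: t_def field_simps)
  ultimately show False using a by linarith
qed

lemma symmetric_mat_rayleigh_min:
  fixes M :: "real^'n^'n"
  assumes "symmetric_mat M"
  obtains x0 where "norm x0 = 1" and "\<And>x. (x0 \<bullet> (M *v x0)) * (norm x)\<^sup>2 \<le> x \<bullet> (M *v x)"
    and "M *v x0 = (x0 \<bullet> (M *v x0)) *\<^sub>R x0"
proof -
  have "continuous_on (sphere 0 1) (\<lambda>x::real^'n. x \<bullet> (M *v x))"
    by (intro continuous_intros matrix_vector_mult_linear_continuous_on)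
  moreover have "sphere (0::real^'n) 1 \<noteq> {}"
    by simp
  ultimately obtain x0 where x0: "x0 \<in> sphere 0 1"
    and least: "\<And>y. y \<in> sphere 0 1 \<Longrightarrow> x0 \<bullet> (M *v x0) \<le> y \<bullet> (M *v y)"
    using continuous_attains_inf[OF compact_sphere] by blast
  define m where "m = x0 \<bullet> (M *v x0)"
  have lower: "m * (norm x)\<^sup>2 \<le> x \<bullet> (M *v x)" for x
  proof (cases "x = 0")
    case False
    define u where "u = (1 / norm x) *\<^sub>R x"
    have "u \<in> sphere 0 1"
      using False by (simp add: u_def)
    then have "m \<le> u \<bullet> (M *v u)"
      using least by (simp add: m_def)
    also have "u \<bullet> (M *v u) = (x \<bullet> (M *v x)) / (norm x)\<^sup>2"
      by (simp add: u_def matrix_vector_mult_scaleR power2_eq_square)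
    finally show ?thesis using False by (simp add: field_simps)
  qed simp
  define N where "N = M - m *\<^sub>R mat 1"
  have N_mult: "N *v x = M *v x - m *\<^sub>R x" for x
    by (simp add: N_def matrix_vector_mult_diff_rdistrib scaleR_matrix_vector_assoc[symmetric])
  have "symmetric_mat N"
    using assms by (simp add: N_def symmetric_mat_def transpose_diff transpose_scalar)
  moreover have "0 \<le> x \<bullet> (N *v x)" for x
    using lower[of x] by (simp add: N_mult inner_diff_right dot_square_norm)
  ultimately have "psd N"
    by (simp add: psd_def)
  moreover have "x0 \<bullet> (N *v x0) = 0"
    using x0 by (simp add: N_mult inner_diff_right dot_square_norm m_def)
  ultimately have "M *v x0 = m *\<^sub>R x0"
    using psd_quadratic_form_eq_0_imp_kernel N_mult by fastforce
  then show thesis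
    using that x0 lower by (simp add: m_def)
qed

lemma finite_eigenvalues_symmetric:
  fixes M :: "real^'n^'n"
  assumes "symmetric_mat M"
  shows "finite (eigenvalues M)"
proof -
  define f where "f \<mu> = (SOME v. v \<noteq> 0 \<and> M *v v = \<mu> *\<^sub>R v)" for \<mu>
  have f: "f \<mu> \<noteq> 0 \<and> M *v f \<mu> = \<mu> *\<^sub>R f \<mu>" if "\<mu> \<in> eigenvalues M" for \<mu>
  proof -
    have "\<exists>v. v \<noteq> 0 \<and> M *v v = \<mu> *\<^sub>R v"
      using that unfolding eigenvalues_def by blast
    from someI_ex[OF this] show ?thesis
      unfolding f_def .
  qed
  have inj: "inj_on f (eigenvalues M)"
  proof (rule inj_onI)
    fix a b assume a: "a \<in> eigenvalues M" and b: "b \<in> eigenvalues M" and "f a = f b"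
    then have "a *\<^sub>R f a = b *\<^sub>R f a"
      using f[OF a] f[OF b] by metis
    then show "a = b"
      using f[OF a] by simp
  qed
  have "pairwise orthogonal (f ` eigenvalues M)"
  proof (unfold pairwise_def, clarify)
    fix a b assume a: "a \<in> eigenvalues M" and b: "b \<in> eigenvalues M" and "f a \<noteq> f b"
    have "a * (f a \<bullet> f b) = (M *v f a) \<bullet> f b"
      using f[OF a] by simp
    also have "\<dots> = f a \<bullet> (M *v f b)"
      using symmetric_mat_inner_commute[OF assms] by simp
    also have "\<dots> = b * (f a \<bullet> f b)"
      using f[OF b] by simp
    finally have "(a - b) * (f a \<bullet> f b) = 0"
      by (simp add: algebra_simps)
    then show "orthogonal (f a) (f b)"
      using \<open>f a \<noteq> f b\<close> by (auto simp: orthogonal_def)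
  qed
  moreover have "0 \<notin> f ` eigenvalues M"
    using f by auto
  ultimately have "independent (f ` eigenvalues M)"
    using pairwise_orthogonal_independent by blast
  then show ?thesis
    using inj independent_bound finite_imageD by blast
qed

lemma symmetric_mat_Min_eigenvalue:
  fixes M :: "real^'n^'n"
  assumes "symmetric_mat M"
  obtains v where "v \<noteq> 0" and "M *v v = Min (eigenvalues M) *\<^sub>R v"
proof -
  obtain x0 where "norm x0 = 1" "M *v x0 = (x0 \<bullet> (M *v x0)) *\<^sub>R x0"
    using symmetric_mat_rayleigh_min[OF assms] by blast
  then have "eigenvalues M \<noteq> {}"
    unfolding eigenvalues_def by (auto intro!: exI[of _ x0])
  then have "Min (eigenvalues M) \<in> eigenvalues M"
    using Min_in finite_eigenvalues_symmetric[OF assms] by blast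
  then obtain v where "v \<noteq> 0" "M *v v = Min (eigenvalues M) *\<^sub>R v"
    unfolding eigenvalues_def by blast
  then show thesis
    by (rule that)
qed

lemma psd_invertible_coercive:
  fixes A :: "real^'n^'n"
  assumes "psd A" and "invertible A"
  obtains c where "c > 0" and "\<And>x. c * (norm x)\<^sup>2 \<le> x \<bullet> (A *v x)"
proof -
  have "symmetric_mat A"
    using assms(1) by (simp add: psd_def)
  then obtain x0 where "norm x0 = 1"
    and lower: "\<And>x. (x0 \<bullet> (A *v x0)) * (norm x)\<^sup>2 \<le> x \<bullet> (A *v x)"
    and eigen: "A *v x0 = (x0 \<bullet> (A *v x0)) *\<^sub>R x0"
    using symmetric_mat_rayleigh_min by blast
  have "x0 \<bullet> (A *v x0) \<noteq> 0"
  proof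
    assume "x0 \<bullet> (A *v x0) = 0"
    then have "A *v x0 = A *v 0" using eigen by simp
    then have "x0 = 0" using inj_matrix_vector_mult[OF assms(2)] by (metis injD)
    then show False using \<open>norm x0 = 1\<close> by simp
  qed
  moreover have "x0 \<bullet> (A *v x0) \<ge> 0"
    using assms(1) by (simp add: psd_def)
  ultimately have "x0 \<bullet> (A *v x0) > 0"
    by simp
  then show thesis
    using that lower by blast
qed

lemma pos_def_invertible:
  assumes "pos_def S"
  shows "invertible S"
proof -
  have "S *v x = 0 \<Longrightarrow> x = 0" for x
    using assms unfolding pos_def_def by force
  then show ?thesis
    using matrix_left_invertible_ker invertible_left_inverse by blast
qed

lemma invertible_matrix_inv:
  assumes "invertible S"
  shows "S ** matrix_inv S = mat 1" and "matrix_inv S ** S = mat 1"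
proof -
  have "\<exists>A'. S ** A' = mat 1 \<and> A' ** S = mat 1" using assms invertible_def by blast
  from someI_ex[OF this] show "S ** matrix_inv S = mat 1" "matrix_inv S ** S = mat 1"
    unfolding matrix_inv_def by auto
qed

lemma pos_def_matrix_inv_diag_pos:
  fixes S :: "real^'n^'n"
  assumes "pos_def S"
  shows "matrix_inv S $ i $ i > 0"
proof -
  define u where "u = matrix_inv S *v axis i 1"
  have Su: "S *v u = axis i 1"
    by (simp add: u_def matrix_vector_mul_assoc invertible_matrix_inv pos_def_invertible[OF assms])
  then have "u \<noteq> 0" by (metis axis_eq_0_iff matrix_vector_mult_0_right zero_neq_one)
  then have "u \<bullet> (S *v u) > 0" using assms by (simp add: pos_def_def)
  moreover have "u \<bullet> (S *v u) = matrix_inv S $ i $ i"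
    unfolding Su inner_axis
    by (simp add: u_def matrix_vector_mult_def axis_def if_distrib[of "\<lambda>a. _ * a"] cong: if_cong)
  ultimately show ?thesis by simp
qed

section \<open>The optimisation problem\<close>

lemma lambda_min_generalised_eigenvector:
  fixes S :: "real^'n^'n"
  assumes "pos_def S"
  obtains w where "w \<noteq> 0" and "w \<bullet> (S *v w) = lambda_min S * (w \<bullet> (D0 S *v w))"
proof -
  define d where "d = (\<chi> i. sqrt (2 * matrix_inv S $ i $ i))"
  define M where "M = diag_mat d ** S ** diag_mat d"
  have d_pos: "d $ i > 0" and d_sq: "(d $ i)\<^sup>2 = 2 * matrix_inv S $ i $ i" for i
    using pos_def_matrix_inv_diag_pos[OF assms, of i] by (simp_all add: d_def)
  have "symmetric_mat M"
    using assms symmetric_diag_mat[of d]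
    by (simp add: M_def pos_def_def symmetric_mat_def matrix_transpose_mul matrix_mul_assoc)
  then obtain v where "v \<noteq> 0" and v: "M *v v = lambda_min S *\<^sub>R v"
    using symmetric_mat_Min_eigenvalue
    by (metis M_def d_def D0_inv_sqrt_def lambda_min_def)
  define w where "w = diag_mat d *v v"
  have w_nth: "w $ i = d $ i * v $ i" for i
    by (simp add: w_def diag_mat_mult_vec)
  have "w \<bullet> (S *v w) = v \<bullet> (M *v v)"
    using symmetric_mat_inner_commute[OF symmetric_diag_mat[of d]]
    by (simp add: M_def w_def matrix_vector_mul_assoc[symmetric])
  also have "\<dots> = lambda_min S * (\<Sum>i\<in>UNIV. (v $ i)\<^sup>2)"
    by (simp add: v inner_vec_def sum_distrib_left power2_eq_square mult.left_commute)
  also have "(\<Sum>i\<in>UNIV. (v $ i)\<^sup>2) = w \<bullet> (D0 S *v w)"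
    using pos_def_matrix_inv_diag_pos[OF assms]
    by (simp add: D0_def diag_mat_quadratic_form w_nth d_sq power_mult_distrib less_imp_neq[symmetric])
  finally have "w \<bullet> (S *v w) = lambda_min S * (w \<bullet> (D0 S *v w))" .
  moreover obtain j where "v $ j \<noteq> 0"
    using \<open>v \<noteq> 0\<close> by (metis vec_eq_iff zero_index)
  then have "w \<noteq> 0"
    using w_nth[of j] d_pos[of j] by (metis mult_eq_0_iff less_irrefl zero_index)
  ultimately show thesis using that by blast
qed

lemma S_set_shift_diagonal:
  fixes S Sh St :: "real^'n^'n"
  assumes "(Sh, St) \<in> S_set S"
    and coercive: "\<And>x. c * (norm x)\<^sup>2 \<le> x \<bullet> (Sh *v x)"
    and "0 \<le> t" "t \<le> c"
  shows "(Sh - t *\<^sub>R diag_mat (axis i 1), St + t *\<^sub>R diag_mat (axis i 1)) \<in> S_set S"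
proof -
  let ?E = "diag_mat (axis i 1)"
  have Sh: "psd Sh" and St: "psd St" "diagonal_mat St" and "S = Sh + St"
    using assms(1) by (auto simp: S_set_def)
  have quad_E: "x \<bullet> ((t *\<^sub>R ?E) *v x) = t * (x $ i)\<^sup>2" for x
    by (simp add: scaleR_matrix_vector_assoc[symmetric] quadratic_form_diag_mat_axis)
  have "psd (Sh - t *\<^sub>R ?E)"
    unfolding psd_def
  proof
    show "symmetric_mat (Sh - t *\<^sub>R ?E)"
      using Sh symmetric_diag_mat[of "axis i 1"]
      by (simp add: psd_def symmetric_mat_def transpose_diff transpose_scalar)
    show "\<forall>x. 0 \<le> x \<bullet> ((Sh - t *\<^sub>R ?E) *v x)"
    proof
      fix x :: "real^'n"
      have "(x $ i)\<^sup>2 \<le> (norm x)\<^sup>2"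
        using component_le_norm_cart[of x i] by (metis abs_ge_zero power2_abs power_mono)
      then have "t * (x $ i)\<^sup>2 \<le> c * (norm x)\<^sup>2"
        using assms(3,4) by (meson mult_mono zero_le_power2 order_trans)
      then show "0 \<le> x \<bullet> ((Sh - t *\<^sub>R ?E) *v x)"
        using coercive[of x] quad_E[of x]
        by (simp add: matrix_vector_mult_diff_rdistrib inner_diff_right)
    qed
  qed
  moreover have "psd (St + t *\<^sub>R ?E)"
    using St symmetric_diag_mat[of "axis i 1"] quad_E assms(3)
    by (simp add: psd_def symmetric_mat_def transpose_add transpose_scalar
        matrix_vector_mult_add_rdistrib inner_add_right add_nonneg_nonneg)
  moreover have "diagonal_mat (St + t *\<^sub>R ?E)"
    using St(2) by (simp add: diagonal_mat_def diag_mat_def)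
  ultimately show ?thesis
    using \<open>S = Sh + St\<close> by (simp add: S_set_def)
qed

lemma reg_obj_diff_scaleR:
  "reg_obj lam S (Sh - t *\<^sub>R E) = reg_obj lam S Sh - t * (1 - lam) * trace E
    + t * trace (E ** matrix_inv S ** Sh) + t * trace (Sh ** matrix_inv S ** E)
    - t\<^sup>2 * trace (E ** matrix_inv S ** E)"
  by (simp add: reg_obj_def matrix_diff_ldistrib matrix_diff_rdistrib matrix_scalar_ac
      scalar_matrix_assoc[symmetric] trace_sub trace_add trace_scaleR scaleR_diff_right
      power2_eq_square algebra_simps)

lemma reg_obj_shift_diagonal:
  fixes S Sh St :: "real^'n^'n"
  assumes "invertible S" and "S = Sh + St" and "diagonal_mat St"
  shows "reg_obj lam S (Sh - t *\<^sub>R diag_mat (axis i 1))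
    = reg_obj lam S Sh + t * (1 + lam - 2 * matrix_inv S $ i $ i * St $ i $ i)
      - t\<^sup>2 * matrix_inv S $ i $ i"
proof -
  let ?P = "matrix_inv S" and ?E = "diag_mat (axis i 1)"
  have "?P ** Sh = mat 1 - ?P ** St" and "Sh ** ?P = mat 1 - St ** ?P"
    using assms(2) invertible_matrix_inv[OF assms(1)]
    by (simp_all add: eq_diff_eq matrix_add_ldistrib[symmetric] matrix_add_rdistrib[symmetric])
  then have EPSh: "trace (?E ** ?P ** Sh) = 1 - ?P $ i $ i * St $ i $ i"
    and ShPE: "trace (Sh ** ?P ** ?E) = 1 - St $ i $ i * ?P $ i $ i"
    by (simp_all add: matrix_mul_assoc[symmetric] trace_diag_mat_axis_mult trace_mul_sym[of _ ?E]
        diagonal_mat_mult_diag_right[OF assms(3)] diagonal_mat_mult_diag_left[OF assms(3)] mat_def)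
  have EPE: "trace (?E ** ?P ** ?E) = ?P $ i $ i"
    by (simp add: matrix_mul_assoc[symmetric] trace_diag_mat_axis_mult
        diagonal_mat_mult_diag_right[OF diagonal_diag_mat])
  show ?thesis
    unfolding reg_obj_diff_scaleR EPSh ShPE EPE trace_diag_mat_axis by (simp add: algebra_simps)
qed

lemma is_opt_diagonal_lower_bound:
  fixes S Sh St :: "real^'n^'n"
  assumes "pos_def S" and "is_opt lam S Sh St" and "invertible Sh"
  shows "(1 + lam) * D0 S $ i $ i \<le> St $ i $ i"
proof -
  let ?p = "matrix_inv S $ i $ i"
  define a where "a = 1 + lam - 2 * ?p * St $ i $ i"
  have p: "?p > 0" by (rule pos_def_matrix_inv_diag_pos[OF assms(1)])
  have feasible: "(Sh, St) \<in> S_set S"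
    and optimal: "\<And>A B. (A, B) \<in> S_set S \<Longrightarrow> reg_obj lam S A \<le> reg_obj lam S Sh"
    using assms(2) by (auto simp: is_opt_def)
  have "S = Sh + St" "psd Sh" "diagonal_mat St"
    using feasible by (auto simp: S_set_def)
  obtain c where "c > 0" and coercive: "\<And>x. c * (norm x)\<^sup>2 \<le> x \<bullet> (Sh *v x)"
    using psd_invertible_coercive[OF \<open>psd Sh\<close> assms(3)] by blast
  have "a \<le> 0"
  proof (rule ccontr)
    assume "\<not> a \<le> 0"
    define t where "t = min c (a / (2 * ?p))"
    have "t > 0" "t \<le> c" "t * ?p \<le> a / 2"
      using \<open>c > 0\<close> \<open>\<not> a \<le> 0\<close> p by (auto simp: t_def min_def field_simps)
    have "reg_obj lam S (Sh - t *\<^sub>R diag_mat (axis i 1)) \<le> reg_obj lam S Sh"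
      using \<open>t > 0\<close> \<open>t \<le> c\<close> by (intro optimal[OF S_set_shift_diagonal[OF feasible coercive]]) simp_all
    then have "t * a \<le> t * (t * ?p)"
      unfolding reg_obj_shift_diagonal[OF pos_def_invertible[OF assms(1)] \<open>S = Sh + St\<close>
          \<open>diagonal_mat St\<close>]
      by (simp add: a_def power2_eq_square algebra_simps)
    then have "a \<le> a / 2"
      using \<open>t > 0\<close> \<open>t * ?p \<le> a / 2\<close> by simp
    then show False using \<open>\<not> a \<le> 0\<close> by simp
  qed
  then show ?thesis
    using p by (simp add: a_def D0_def field_simps)
qed

lemma is_opt_quadratic_form_lower_bound:
  fixes S Sh St :: "real^'n^'n"
  assumes "pos_def S" and "is_opt lam S Sh St" and "invertible Sh"
  shows "(1 + lam) * (w \<bullet> (D0 S *v w)) \<le> w \<bullet> (St *v w)"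
proof -
  have "diagonal_mat St"
    using assms(2) by (simp add: is_opt_def S_set_def)
  have "diagonal_mat (D0 S)"
    by (simp add: D0_def diagonal_diag_mat)
  then have "(1 + lam) * (w \<bullet> (D0 S *v w)) = (\<Sum>i\<in>UNIV. ((1 + lam) * D0 S $ i $ i) * (w $ i)\<^sup>2)"
    by (simp add: diagonal_mat_quadratic_form sum_distrib_left mult.assoc)
  also have "\<dots> \<le> (\<Sum>i\<in>UNIV. St $ i $ i * (w $ i)\<^sup>2)"
    by (intro sum_mono mult_right_mono is_opt_diagonal_lower_bound[OF assms]) simp
  also have "\<dots> = w \<bullet> (St *v w)"
    by (simp add: diagonal_mat_quadratic_form[OF \<open>diagonal_mat St\<close>])
  finally show ?thesis .
qed

theorem mainTheorem18:
  fixes S Sh St :: "real^'n^'n" and lam :: real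
  assumes "pos_def S"
    and "lam \<ge> 0"
    and "lam \<ge> lambda_min S - 1"
    and "is_opt lam S Sh St"
  shows "\<not> invertible Sh"
proof
  assume "invertible Sh"
  have "S = Sh + St" "psd Sh"
    using assms(4) by (auto simp: is_opt_def S_set_def)
  obtain c where "c > 0" and coercive: "\<And>x. c * (norm x)\<^sup>2 \<le> x \<bullet> (Sh *v x)"
    using psd_invertible_coercive[OF \<open>psd Sh\<close> \<open>invertible Sh\<close>] by blast
  obtain w where "w \<noteq> 0" and w: "w \<bullet> (S *v w) = lambda_min S * (w \<bullet> (D0 S *v w))"
    using lambda_min_generalised_eigenvector[OF assms(1)] by blast
  have "0 \<le> w \<bullet> (D0 S *v w)"
    using pos_def_matrix_inv_diag_pos[OF assms(1)]
    by (auto simp: D0_def diag_mat_quadratic_form less_imp_le intro!: sum_nonneg)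
  have "w \<bullet> (Sh *v w) = w \<bullet> (S *v w) - w \<bullet> (St *v w)"
    using \<open>S = Sh + St\<close> by (simp add: matrix_vector_mult_add_rdistrib inner_add_right)
  also have "\<dots> \<le> (lambda_min S - (1 + lam)) * (w \<bullet> (D0 S *v w))"
    using w is_opt_quadratic_form_lower_bound[OF assms(1,4) \<open>invertible Sh\<close>, of w]
    by (simp add: algebra_simps)
  also have "\<dots> \<le> 0"
    using assms(3) \<open>0 \<le> w \<bullet> (D0 S *v w)\<close> by (simp add: mult_nonpos_nonneg)
  finally have "c * (norm w)\<^sup>2 \<le> 0"
    using coercive order_trans by blast
  then show False
    using \<open>c > 0\<close> \<open>w \<noteq> 0\<close> by (simp add: mult_le_0_iff)
qed

end
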